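(* Let $K\neq0$ and let $(\mathcal M,\rho)$ be a semimetric space such that, if $K>0$, $\rho(A,B)+\rho(B,C)+\rho(A,C)<2\pi/\sqrt K$ for every triple of distinct points $A,B,C\in\mathcal M$. If $(\mathcal M,\rho)$ satisfies the one-sided four point $\operatorname{cosq}_K$ condition, then $\rho$ satisfies the triangle inequality, i.e. $(\mathcal M,\rho)$ is a metric space.
   Context: A semimetric space is a set with a symmetric nonnegative distance $\rho$ with $\rho(P,Q)=0$ iff $P=Q$ (no triangle inequality assumed). Let $\kappa=\sqrt{|K|}$. For $A\neq P$, $B\neq Q$ (with $\rho(A,P),\rho(B,Q),\rho(A,B)<\pi/\sqrt K$ if $K>0$), put $x=\rho(A,P)$, $y=\rho(B,Q)$, $a=\rho(A,B)$, $b=\rho(P,Q)$, $d=\rho(P,B)$, $f=\rho(A,Q)$ (points may coincide across the two pairs, e.g. $B=A$); for $K>0$ $$\operatorname{cosq}_K(\overrightarrow{AP},\overrightarrow{BQ})=\frac{\cos\kappa b+\cos\kappa x\cos\kappa y}{\sin\kappa x\sin\kappa y}-\frac{(\cos\kappa x+\cos\kappa d)(\cos\kappa y+\cos\kappa f)}{(1+\cos\kappa a)\sin\kappa x\sin\kappa y},$$ and for $K<0$ $$\operatorname{cosq}_K(\overrightarrow{AP},\overrightarrow{BQ})=\frac{(\cosh\kappa x+\cosh\kappa d)(\cosh\kappa y+\cosh\kappa f)}{(1+\cosh\kappa a)\sinh\kappa x\sinh\kappa y}-\frac{\cosh\kappa b+\cosh\kappa x\cosh\kappa y}{\sinh\kappa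 x\sinh\kappa y}.$$ Upper/lower four point $\operatorname{cosq}_K$ condition: $\operatorname{cosq}_K\le1$ / $\ge-1$ for all such quadruples; one-sided: at least one holds. *)

theory Defs
  imports Complex_Main
begin

definition semimetric_space :: "'a set \<Rightarrow> ('a \<Rightarrow> 'a \<Rightarrow> real) \<Rightarrow> bool" where
  "semimetric_space M \<rho> \<longleftrightarrow>
     (\<forall>P\<in>M. \<forall>Q\<in>M. \<rho> P Q \<ge> 0 \<and> \<rho> P Q = \<rho> Q P \<and> (\<rho> P Q = 0 \<longleftrightarrow> P = Q))"

definition metric_triangle :: "'a set \<Rightarrow> ('a \<Rightarrow> 'a \<Rightarrow> real) \<Rightarrow> bool" where
  "metric_triangle M \<rho> \<longleftrightarrow> (\<forall>A\<in>M. \<forall>B\<in>M. \<forall>C\<in>M. \<rho> A C \<le> \<rho> A B + \<rho> B C)"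

definition cosq :: "real \<Rightarrow> ('a \<Rightarrow> 'a \<Rightarrow> real) \<Rightarrow> 'a \<Rightarrow> 'a \<Rightarrow> 'a \<Rightarrow> 'a \<Rightarrow> real" where
  "cosq K \<rho> A P B Q =
     (let \<kappa> = sqrt \<bar>K\<bar>; x = \<rho> A P; y = \<rho> B Q; a = \<rho> A B; b = \<rho> P Q; d = \<rho> P B; f = \<rho> A Q in
      if K > 0 then
        (cos (\<kappa>*b) + cos (\<kappa>*x) * cos (\<kappa>*y)) / (sin (\<kappa>*x) * sin (\<kappa>*y))
        - ((cos (\<kappa>*x) + cos (\<kappa>*d)) * (cos (\<kappa>*y) + cos (\<kappa>*f)))
          / ((1 + cos (\<kappa>*a)) * sin (\<kappa>*x) * sin (\<kappa>*y))
      else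
        ((cosh (\<kappa>*x) + cosh (\<kappa>*d)) * (cosh (\<kappa>*y) + cosh (\<kappa>*f)))
          / ((1 + cosh (\<kappa>*a)) * sinh (\<kappa>*x) * sinh (\<kappa>*y))
        - (cosh (\<kappa>*b) + cosh (\<kappa>*x) * cosh (\<kappa>*y)) / (sinh (\<kappa>*x) * sinh (\<kappa>*y)))"

definition admissible_quad :: "real \<Rightarrow> 'a set \<Rightarrow> ('a \<Rightarrow> 'a \<Rightarrow> real) \<Rightarrow> 'a \<Rightarrow> 'a \<Rightarrow> 'a \<Rightarrow> 'a \<Rightarrow> bool" where
  "admissible_quad K M \<rho> A P B Q \<longleftrightarrow>
     A \<in> M \<and> P \<in> M \<and> B \<in> M \<and> Q \<in> M \<and> A \<noteq> P \<and> B \<noteq> Q \<and>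
     (K > 0 \<longrightarrow> \<rho> A P < pi / sqrt K \<and> \<rho> B Q < pi / sqrt K \<and> \<rho> A B < pi / sqrt K)"

definition upper_cosq_condition :: "real \<Rightarrow> 'a set \<Rightarrow> ('a \<Rightarrow> 'a \<Rightarrow> real) \<Rightarrow> bool" where
  "upper_cosq_condition K M \<rho> \<longleftrightarrow>
     (\<forall>A P B Q. admissible_quad K M \<rho> A P B Q \<longrightarrow> cosq K \<rho> A P B Q \<le> 1)"

definition lower_cosq_condition :: "real \<Rightarrow> 'a set \<Rightarrow> ('a \<Rightarrow> 'a \<Rightarrow> real) \<Rightarrow> bool" where
  "lower_cosq_condition K M \<rho> \<longleftrightarrow>
     (\<forall>A P B Q. admissible_quad K M \<rho> A P B Q \<longrightarrow> cosq K \<rho> A P B Q \<ge> -1)"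

definition one_sided_cosq_condition :: "real \<Rightarrow> 'a set \<Rightarrow> ('a \<Rightarrow> 'a \<Rightarrow> real) \<Rightarrow> bool" where
  "one_sided_cosq_condition K M \<rho> \<longleftrightarrow>
     upper_cosq_condition K M \<rho> \<or> lower_cosq_condition K M \<rho>"

end

theory Submission
  imports Defs
begin

text \<open>Let \<open>x = \<rho>(A,B)\<close>, \<open>y = \<rho>(B,C)\<close>, \<open>b = \<rho>(A,C)\<close> for distinct \<open>A, B, C\<close>.  Both quadruples
  \<open>(B,A,B,C)\<close> and \<open>(A,B,B,C)\<close> reduce \<open>cosq\<^sub>K\<close> to \<open>\<plusminus>\<close> the cosine of the angle opposite \<open>b\<close> in the
  comparison triangle with sides \<open>x, y, b\<close> in the model plane of curvature \<open>K\<close>, so either one-sided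
  condition says that this cosine is at least \<open>-1\<close>.  By the law of cosines this means
  \<open>cos (\<kappa> b) \<ge> cos (\<kappa> (x + y))\<close> (resp. \<open>cosh (\<kappa> b) \<le> cosh (\<kappa> (x + y))\<close>), and the perimeter bound
  keeps all angles in the range where this forces \<open>b \<le> x + y\<close>.\<close>

definition comparison_cos :: "real \<Rightarrow> real \<Rightarrow> real \<Rightarrow> real \<Rightarrow> real" where
  "comparison_cos K x y b =
     (let \<kappa> = sqrt \<bar>K\<bar> in
      if K > 0 then (cos (\<kappa>*b) - cos (\<kappa>*x) * cos (\<kappa>*y)) / (sin (\<kappa>*x) * sin (\<kappa>*y))
      else (cosh (\<kappa>*x) * cosh (\<kappa>*y) - cosh (\<kappa>*b)) / (sinh (\<kappa>*x) * sinh (\<kappa>*y)))"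

lemma cosq_vertex_eq_comparison_cos:
  assumes "\<rho> B B = 0" and "\<rho> B A = \<rho> A B"
  shows "cosq K \<rho> B A B C = comparison_cos K (\<rho> A B) (\<rho> B C) (\<rho> A C)"
  using assms by (simp add: cosq_def comparison_cos_def Let_def divide_simps)

lemma cosq_path_eq_neg_comparison_cos:
  assumes "\<rho> B B = 0" and "K > 0 \<Longrightarrow> cos (sqrt K * \<rho> A B) \<noteq> -1"
  shows "cosq K \<rho> A B B C = - comparison_cos K (\<rho> A B) (\<rho> B C) (\<rho> A C)"
proof -
  have cancel: "(c + 1) * u / ((1 + c) * s * t) = u / (s * t)" if "1 + c \<noteq> 0" for c u s t :: real
    using that by (simp add: add.commute)
  have "1 + cosh t \<noteq> 0" for t :: real
    using cosh_real_ge_1[of t] by linarith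
  moreover have "K > 0 \<Longrightarrow> 1 + cos (sqrt K * \<rho> A B) \<noteq> 0"
    using assms(2) by linarith
  ultimately show ?thesis
    using assms(1) by (simp add: cosq_def comparison_cos_def Let_def cancel)
      (simp add: diff_divide_distrib[symmetric] minus_divide_left algebra_simps)
qed

lemma cos_add_le_of_angle_ge_neg1:
  fixes X Y Z :: real
  assumes "0 < X" "X < pi" "0 < Y" "Y < pi"
    and "(cos Z - cos X * cos Y) / (sin X * sin Y) \<ge> -1"
  shows "cos (X + Y) \<le> cos Z"
proof -
  have "sin X * sin Y > 0"
    using assms(1-4) sin_gt_zero by simp
  with assms(5) have "cos Z - cos X * cos Y \<ge> - (sin X * sin Y)"
    by (simp add: field_simps)
  then show ?thesis by (simp add: cos_add)
qed

lemma cosh_le_cosh_add_of_angle_ge_neg1: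
  fixes X Y Z :: real
  assumes "0 < X" "0 < Y"
    and "(cosh X * cosh Y - cosh Z) / (sinh X * sinh Y) \<ge> -1"
  shows "cosh Z \<le> cosh (X + Y)"
proof -
  have "sinh X * sinh Y > 0"
    using assms(1,2) by simp
  with assms(3) have "cosh X * cosh Y - cosh Z \<ge> - (sinh X * sinh Y)"
    by (simp add: field_simps)
  then show ?thesis by (simp add: cosh_add)
qed

lemma le_of_cos_le_cos:
  fixes S T :: real
  assumes "0 \<le> S" "S < pi" "T < 2 * pi - S" "cos S \<le> cos T"
  shows "T \<le> S"
proof (rule ccontr)
  assume "\<not> T \<le> S"
  then have "S < T" by simp
  have "cos T < cos S"
  proof (cases "T \<le> pi")
    case True
    then show ?thesis using assms(1) \<open>S < T\<close> by (intro cos_monotone_0_pi) auto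
  next
    case False
    have "cos (2 * pi - T) < cos S"
      using assms(1-3) False by (intro cos_monotone_0_pi) auto
    then show ?thesis by simp
  qed
  with assms(4) show False by simp
qed

text \<open>The perimeter bound is what excludes, for \<open>K > 0\<close>, the second solution \<open>\<kappa> b \<ge> 2\<pi> - \<kappa> (x + y)\<close>
  of \<open>cos (\<kappa> b) \<ge> cos (\<kappa> (x + y))\<close>.\<close>
lemma comparison_triangle_inequality:
  fixes K x y b :: real
  assumes "K \<noteq> 0" "0 < x" "0 < y" "0 \<le> b"
    and "K > 0 \<Longrightarrow> x + y < pi / sqrt K \<and> x + y + b < 2 * pi / sqrt K"
    and "comparison_cos K x y b \<ge> -1"
  shows "b \<le> x + y"
proof (cases "K > 0")
  case True
  define \<kappa> where "\<kappa> = sqrt K"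
  have "\<kappa> > 0" using True by (simp add: \<kappa>_def)
  have "x + y < pi / \<kappa>" "x + y + b < 2 * pi / \<kappa>"
    using assms(5)[OF True] by (simp_all add: \<kappa>_def)
  then have short: "\<kappa> * x + \<kappa> * y < pi" and perimeter: "\<kappa> * b < 2 * pi - (\<kappa> * x + \<kappa> * y)"
    using \<open>\<kappa> > 0\<close> by (simp_all add: pos_less_divide_eq algebra_simps)
  have xpos: "\<kappa> * x > 0" and ypos: "\<kappa> * y > 0"
    using assms(2,3) \<open>\<kappa> > 0\<close> by simp_all
  have angle: "(cos (\<kappa> * b) - cos (\<kappa> * x) * cos (\<kappa> * y)) / (sin (\<kappa> * x) * sin (\<kappa> * y)) \<ge> -1"
    using assms(6) True by (simp add: comparison_cos_def Let_def \<kappa>_def)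
  have "cos (\<kappa> * x + \<kappa> * y) \<le> cos (\<kappa> * b)"
    by (rule cos_add_le_of_angle_ge_neg1[OF xpos _ ypos _ angle]) (use xpos ypos short in linarith)+
  then have "\<kappa> * b \<le> \<kappa> * x + \<kappa> * y"
    by (rule le_of_cos_le_cos[rotated 3]) (use xpos ypos short perimeter in linarith)+
  then show ?thesis
    using \<open>\<kappa> > 0\<close> by (simp add: distrib_left[symmetric])
next
  case False
  define \<kappa> where "\<kappa> = sqrt \<bar>K\<bar>"
  have "\<kappa> > 0" using assms(1) by (simp add: \<kappa>_def)
  then have "\<kappa> * x > 0" "\<kappa> * y > 0"
    using assms(2,3) by simp_all
  moreover have "(cosh (\<kappa> * x) * cosh (\<kappa> * y) - cosh (\<kappa> * b)) / (sinh (\<kappa> * x) * sinh (\<kappa> * y)) \<ge> -1"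
    using assms(6) False by (simp add: comparison_cos_def Let_def \<kappa>_def)
  ultimately have "cosh (\<kappa> * b) \<le> cosh (\<kappa> * x + \<kappa> * y)"
    by (rule cosh_le_cosh_add_of_angle_ge_neg1)
  then have "\<kappa> * b \<le> \<kappa> * (x + y)"
    using assms(2-4) \<open>\<kappa> > 0\<close> by (simp add: cosh_real_nonneg_le_iff distrib_left)
  then show ?thesis
    using \<open>\<kappa> > 0\<close> by simp
qed

lemma comparison_cos_ge_neg1_if_one_sided_cosq:
  assumes "semimetric_space M \<rho>" "one_sided_cosq_condition K M \<rho>"
    and "A \<in> M" "B \<in> M" "C \<in> M" "A \<noteq> B" "B \<noteq> C"
    and "K > 0 \<Longrightarrow> \<rho> A B < pi / sqrt K \<and> \<rho> B C < pi / sqrt K"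
  shows "comparison_cos K (\<rho> A B) (\<rho> B C) (\<rho> A C) \<ge> -1"
proof -
  have BB: "\<rho> B B = 0" and BA: "\<rho> B A = \<rho> A B" and "\<rho> A B \<ge> 0"
    using assms(1,3,4) unfolding semimetric_space_def by blast+
  have "admissible_quad K M \<rho> A B B C" "admissible_quad K M \<rho> B A B C"
    using assms(3-8) BB BA unfolding admissible_quad_def by auto
  from assms(2) consider "upper_cosq_condition K M \<rho>" | "lower_cosq_condition K M \<rho>"
    unfolding one_sided_cosq_condition_def by blast
  then show ?thesis
  proof cases
    case 1
    have "cos (sqrt K * \<rho> A B) \<noteq> -1" if "K > 0"
    proof -
      have "sqrt K * \<rho> A B < pi"
        using assms(8)[OF that] that by (simp add: pos_less_divide_eq mult.commute)
      then have "cos pi < cos (sqrt K * \<rho> A B)"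
        using \<open>\<rho> A B \<ge> 0\<close> that by (intro cos_monotone_0_pi) simp_all
      then show ?thesis by simp
    qed
    then have "cosq K \<rho> A B B C = - comparison_cos K (\<rho> A B) (\<rho> B C) (\<rho> A C)"
      using BB by (intro cosq_path_eq_neg_comparison_cos)
    moreover have "cosq K \<rho> A B B C \<le> 1"
      using 1 \<open>admissible_quad K M \<rho> A B B C\<close> unfolding upper_cosq_condition_def by blast
    ultimately show ?thesis by simp
  next
    case 2
    have "cosq K \<rho> B A B C = comparison_cos K (\<rho> A B) (\<rho> B C) (\<rho> A C)"
      using BB BA by (intro cosq_vertex_eq_comparison_cos)
    moreover have "cosq K \<rho> B A B C \<ge> -1"
      using 2 \<open>admissible_quad K M \<rho> B A B C\<close> unfolding lower_cosq_condition_def by blast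
    ultimately show ?thesis by simp
  qed
qed

lemma metric_triangleI_distinct:
  assumes "semimetric_space M \<rho>"
    and "\<And>A B C. A \<in> M \<Longrightarrow> B \<in> M \<Longrightarrow> C \<in> M \<Longrightarrow> A \<noteq> B \<Longrightarrow> B \<noteq> C \<Longrightarrow> A \<noteq> C \<Longrightarrow>
           \<rho> A C \<le> \<rho> A B + \<rho> B C"
  shows "metric_triangle M \<rho>"
  unfolding metric_triangle_def
proof (intro ballI)
  fix A B C assume "A \<in> M" "B \<in> M" "C \<in> M"
  then have "\<rho> A B \<ge> 0" "\<rho> B C \<ge> 0" "\<rho> A A = 0" "\<rho> B B = 0" "\<rho> C C = 0"
    using assms(1) unfolding semimetric_space_def by blast+
  then show "\<rho> A C \<le> \<rho> A B + \<rho> B C"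
    using assms(2)[OF \<open>A \<in> M\<close> \<open>B \<in> M\<close> \<open>C \<in> M\<close>]
    by (cases "A = B \<or> B = C \<or> A = C") auto
qed

theorem mainTheorem16:
  fixes K :: real and M :: "'a set" and \<rho> :: "'a \<Rightarrow> 'a \<Rightarrow> real"
  assumes "K \<noteq> 0"
    and "semimetric_space M \<rho>"
    and "K > 0 \<Longrightarrow> \<forall>A\<in>M. \<forall>B\<in>M. \<forall>C\<in>M. A \<noteq> B \<and> B \<noteq> C \<and> A \<noteq> C \<longrightarrow>
            \<rho> A B + \<rho> B C + \<rho> A C < 2 * pi / sqrt K"
    and "one_sided_cosq_condition K M \<rho>"
  shows "metric_triangle M \<rho>"
proof (rule metric_triangleI_distinct[OF assms(2)])
  fix A B C assume in_M: "A \<in> M" "B \<in> M" "C \<in> M" and distinct: "A \<noteq> B" "B \<noteq> C" "A \<noteq> C"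
  have pos: "\<rho> A B > 0" "\<rho> B C > 0" "\<rho> A C \<ge> 0"
    using assms(2) in_M distinct unfolding semimetric_space_def by (auto simp: less_le)
  show "\<rho> A C \<le> \<rho> A B + \<rho> B C"
  proof (rule ccontr)
    assume "\<not> ?thesis"
    moreover have "K > 0 \<Longrightarrow> \<rho> A B + \<rho> B C + \<rho> A C < 2 * (pi / sqrt K)"
      using assms(3) in_M distinct by simp
    ultimately have bounds: "K > 0 \<Longrightarrow> \<rho> A B + \<rho> B C < pi / sqrt K \<and>
                          \<rho> A B + \<rho> B C + \<rho> A C < 2 * pi / sqrt K"
      by auto
    then have "comparison_cos K (\<rho> A B) (\<rho> B C) (\<rho> A C) \<ge> -1"
      using pos by (intro comparison_cos_ge_neg1_if_one_sided_cosq[OF assms(2,4) in_M distinct(1,2)]) auto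
    then have "\<rho> A C \<le> \<rho> A B + \<rho> B C"
      by (rule comparison_triangle_inequality[rotated 5]) (use assms(1) pos bounds in auto)
    with \<open>\<not> ?thesis\<close> show False by simp
  qed
qed

end
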